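(* Let $K=K(n)=o\left(\frac{\log n}{\log\log n}\right)$. For all sufficiently large $n$ there exists an $n$-vertex graph $G(V,E)$ with maximum degree $\Delta$ such that if for each $v\in V$ a set $L(v)$ of $K$ colors is chosen independently and uniformly at random from $[\Delta+1]$, then with probability $1-o(1)$ there is no proper coloring $\mathcal{C}:V\to[\Delta+1]$ of $G$ with $\mathcal{C}(v)\in L(v)$ for all $v\in V$.
   Context: $[t]=\{1,\ldots,t\}$; a proper coloring has no monochromatic edge. *)

theory Defs
  imports Complex_Main "HOL-Library.Landau_Symbols"
begin

definition graph_on :: "nat \<Rightarrow> (nat \<Rightarrow> nat \<Rightarrow> bool) \<Rightarrow> bool" where
  "graph_on n E \<longleftrightarrow> (\<forall>u v. E u v \<longrightarrow> u < n \<and> v < n \<and> u \<noteq> v \<and> E v u)"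

definition degree :: "nat \<Rightarrow> (nat \<Rightarrow> nat \<Rightarrow> bool) \<Rightarrow> nat \<Rightarrow> nat" where
  "degree n E v = card {u. u < n \<and> E v u}"

definition max_degree :: "nat \<Rightarrow> (nat \<Rightarrow> nat \<Rightarrow> bool) \<Rightarrow> nat" where
  "max_degree n E = Max (insert 0 (degree n E ` {..<n}))"

(* The uniform distribution on this
   finite set is exactly: each L(v) chosen independently and uniformly among
   the k-subsets of [c]. *)
definition list_assignments :: "nat \<Rightarrow> nat \<Rightarrow> nat \<Rightarrow> (nat \<Rightarrow> nat set) set" where
  "list_assignments n k c =
     {L. (\<forall>v<n. L v \<subseteq> {1..c} \<and> card (L v) = k) \<and> (\<forall>v. n \<le> v \<longrightarrow> L v = {})}"

definition list_colorable :: "nat \<Rightarrow> (nat \<Rightarrow> nat \<Rightarrow> bool) \<Rightarrow> (nat \<Rightarrow> nat set) \<Rightarrow> bool" where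
  "list_colorable n E L \<longleftrightarrow>
     (\<exists>C :: nat \<Rightarrow> nat. (\<forall>v<n. C v \<in> L v) \<and> (\<forall>u v. u < n \<and> v < n \<and> E u v \<longrightarrow> C u \<noteq> C v))"

definition prob_colorable :: "nat \<Rightarrow> (nat \<Rightarrow> nat \<Rightarrow> bool) \<Rightarrow> nat \<Rightarrow> nat \<Rightarrow> real" where
  "prob_colorable n E k c =
     real (card {L \<in> list_assignments n k c. list_colorable n E L}) / real (card (list_assignments n k c))"

end

theory Submission
  imports Defs "HOL-Real_Asymp.Real_Asymp"
begin

text \<open>
  Let \<open>G\<close> be the disjoint union of \<open>t = n div (K + 1)\<close> cliques of size \<open>K + 1\<close>, plus isolated
  vertices, so that \<open>\<Delta> = K\<close> and the palette \<open>[K + 1]\<close> has exactly \<open>K + 1\<close> subsets of size \<open>K\<close>.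
  A clique all of whose vertices receive the same list cannot be coloured from that list of
  only \<open>K\<close> colours, and this happens independently on each clique with probability
  \<open>(K + 1) ^ -K\<close>. So a colouring exists with probability at most
  \<open>(1 - (K + 1) ^ -K) ^ t \<le> 1 / (1 + t (K + 1) ^ -K)\<close>. Finally \<open>K = o(log n / log log n)\<close>
  gives \<open>(K + 1) ^ (K + 1) \<le> sqrt n\<close> eventually, and then this bound is at most \<open>1 / sqrt n\<close>.
\<close>

definition assignments :: "'a set set \<Rightarrow> nat \<Rightarrow> (nat \<Rightarrow> 'a set) set" where
  "assignments A N = {L. (\<forall>v<N. L v \<in> A) \<and> (\<forall>v. N \<le> v \<longrightarrow> L v = {})}"

lemma list_assignments_eq_assignments:
  "list_assignments n k c = assignments {B. B \<subseteq> {1..c} \<and> card B = k} n"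
  unfolding list_assignments_def assignments_def by auto

definition prefix_asg :: "nat \<Rightarrow> (nat \<Rightarrow> 'a set) \<Rightarrow> nat \<Rightarrow> 'a set" where
  "prefix_asg N L = (\<lambda>v. if v < N then L v else {})"

definition segment_asg :: "nat \<Rightarrow> nat \<Rightarrow> (nat \<Rightarrow> 'a set) \<Rightarrow> nat \<Rightarrow> 'a set" where
  "segment_asg N m L = (\<lambda>i. if i < m then L (N + i) else {})"

definition append_asg :: "nat \<Rightarrow> (nat \<Rightarrow> 'a set) \<Rightarrow> (nat \<Rightarrow> 'a set) \<Rightarrow> nat \<Rightarrow> 'a set" where
  "append_asg N L g = (\<lambda>v. if v < N then L v else g (v - N))"

lemma prefix_append_asg: "L \<in> assignments A N \<Longrightarrow> prefix_asg N (append_asg N L g) = L"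
  by (auto simp: assignments_def prefix_asg_def append_asg_def fun_eq_iff)

lemma segment_append_asg: "g \<in> assignments A m \<Longrightarrow> segment_asg N m (append_asg N L g) = g"
  by (auto simp: assignments_def segment_asg_def append_asg_def fun_eq_iff)

lemma append_prefix_segment_asg:
  "L \<in> assignments A (N + m) \<Longrightarrow> append_asg N (prefix_asg N L) (segment_asg N m L) = L"
  by (auto simp: assignments_def prefix_asg_def segment_asg_def append_asg_def fun_eq_iff)

lemma append_asg_in_assignments:
  "L \<in> assignments A N \<Longrightarrow> g \<in> assignments A m \<Longrightarrow> append_asg N L g \<in> assignments A (N + m)"
  by (auto simp: assignments_def append_asg_def)

text \<open>Independence of the lists on disjoint ranges of vertices, in counting form.\<close>

lemma card_assignments_append:
  "card {L \<in> assignments A (N + m). P (prefix_asg N L) \<and> Q (segment_asg N m L)} =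
   card {L \<in> assignments A N. P L} * card {g \<in> assignments A m. Q g}"
proof -
  have "bij_betw (\<lambda>L. (prefix_asg N L, segment_asg N m L))
          {L \<in> assignments A (N + m). P (prefix_asg N L) \<and> Q (segment_asg N m L)}
          ({L \<in> assignments A N. P L} \<times> {g \<in> assignments A m. Q g})"
    by (rule bij_betw_byWitness[where f' = "\<lambda>(L, g). append_asg N L g"])
       (auto simp: append_prefix_segment_asg prefix_append_asg segment_append_asg
          append_asg_in_assignments, auto simp: assignments_def prefix_asg_def segment_asg_def)
  then show ?thesis
    by (simp add: bij_betw_same_card card_cartesian_product)
qed

lemma card_assignments_one: "card (assignments A 1) = card A"
proof -
  have "bij_betw (\<lambda>L. L 0) (assignments A 1) A"
    by (rule bij_betw_byWitness[where f' = "\<lambda>B v. if v = 0 then B else {}"])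
       (auto simp: assignments_def fun_eq_iff)
  then show ?thesis by (simp add: bij_betw_same_card)
qed

lemma card_assignments: "card (assignments A N) = card A ^ N"
proof (induction N)
  case 0
  have "assignments A 0 = {\<lambda>_. {}}" by (auto simp: assignments_def)
  then show ?case by simp
next
  case (Suc N)
  have "card (assignments A (Suc N)) = card (assignments A N) * card (assignments A 1)"
    using card_assignments_append[of A N 1 "\<lambda>_. True" "\<lambda>_. True"] by simp
  also have "\<dots> = card A ^ Suc N"
    by (simp only: Suc.IH card_assignments_one power_Suc mult.commute)
  finally show ?case .
qed

lemma finite_assignments:
  assumes "finite A"
  shows "finite (assignments A N)"
proof (cases "A = {}")
  case True
  then have "assignments A N \<subseteq> {\<lambda>_. {}}"
    unfolding assignments_def by (auto intro!: ext)
  then show ?thesis by (rule finite_subset) simp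
next
  case False
  then show ?thesis
    using assms by (intro card_ge_0_finite) (simp add: card_assignments card_gt_0_iff)
qed

definition nonconstant :: "nat \<Rightarrow> (nat \<Rightarrow> 'a) \<Rightarrow> bool" where
  "nonconstant m g \<longleftrightarrow> (\<exists>i<m. g i \<noteq> g 0)"

lemma card_constant_assignments:
  assumes "0 < m"
  shows "card {g \<in> assignments A m. \<not> nonconstant m g} = card A"
proof -
  have "bij_betw (\<lambda>g. g 0) {g \<in> assignments A m. \<not> nonconstant m g} A"
  proof (rule bij_betw_byWitness[where f' = "\<lambda>B v. if v < m then B else {}"])
    show "\<forall>g \<in> {g \<in> assignments A m. \<not> nonconstant m g}. (\<lambda>v. if v < m then g 0 else {}) = g"
      unfolding assignments_def nonconstant_def
      by (intro ballI ext) (metis (mono_tags, lifting) mem_Collect_eq not_le)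
    show "\<forall>B\<in>A. (if 0 < m then B else {}) = B" using assms by simp
    show "(\<lambda>g. g 0) ` {g \<in> assignments A m. \<not> nonconstant m g} \<subseteq> A"
      using assms unfolding assignments_def by auto
    show "(\<lambda>B v. if v < m then B else {}) ` A \<subseteq> {g \<in> assignments A m. \<not> nonconstant m g}"
      unfolding assignments_def nonconstant_def by auto
  qed
  then show ?thesis by (simp add: bij_betw_same_card)
qed

lemma card_nonconstant_assignments:
  assumes "finite A" "0 < m"
  shows "card {g \<in> assignments A m. nonconstant m g} = card A ^ m - card A"
proof -
  have "finite (assignments A m)" using assms(1) by (rule finite_assignments)
  then have "card (assignments A m - {g \<in> assignments A m. \<not> nonconstant m g}) =
             card (assignments A m) - card {g \<in> assignments A m. \<not> nonconstant m g}"
    by (intro card_Diff_subset) auto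
  moreover have "assignments A m - {g \<in> assignments A m. \<not> nonconstant m g} =
                 {g \<in> assignments A m. nonconstant m g}"
    by auto
  ultimately show ?thesis
    using assms by (simp add: card_constant_assignments card_assignments)
qed

lemma segment_prefix_asg:
  "j < t \<Longrightarrow> segment_asg (j * m) m (prefix_asg (t * m) L) = segment_asg (j * m) m L"
  using mult_le_mono1[of "Suc j" t m]
  by (auto simp: segment_asg_def prefix_asg_def fun_eq_iff)

lemma card_blockwise_nonconstant:
  "card {L \<in> assignments A (t * m). \<forall>j<t. nonconstant m (segment_asg (j * m) m L)} =
   card {g \<in> assignments A m. nonconstant m g} ^ t"
proof (induction t)
  case 0
  have "assignments A 0 = {\<lambda>_. {}}" by (auto simp: assignments_def)
  then show ?case by simp
next
  case (Suc t)
  let ?good = "\<lambda>t L. \<forall>j<t. nonconstant m (segment_asg (j * m) m L)"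
  have "card {L \<in> assignments A (Suc t * m). ?good (Suc t) L} = card
        {L \<in> assignments A (t * m + m).
           ?good t (prefix_asg (t * m) L) \<and> nonconstant m (segment_asg (t * m) m L)}"
    by (rule arg_cong[where f = card]) (auto simp: segment_prefix_asg add.commute less_Suc_eq)
  also have "\<dots> = card {g \<in> assignments A m. nonconstant m g} ^ Suc t"
    unfolding card_assignments_append[of A "t * m" m "?good t" "nonconstant m"] Suc.IH by simp
  finally show ?case .
qed

definition disjoint_cliques :: "nat \<Rightarrow> nat \<Rightarrow> nat \<Rightarrow> nat \<Rightarrow> bool" where
  "disjoint_cliques m t u v \<longleftrightarrow> u < t * m \<and> v < t * m \<and> u div m = v div m \<and> u \<noteq> v"

lemma div_eq_iff_in_block:
  fixes u m b :: nat
  assumes "0 < m"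
  shows "u div m = b \<longleftrightarrow> b * m \<le> u \<and> u < b * m + m"
proof
  assume "u div m = b"
  moreover have "u < (u div m + 1) * m"
    using assms by (subst div_less_iff_less_mult[symmetric]) simp_all
  ultimately show "b * m \<le> u \<and> u < b * m + m"
    using div_times_less_eq_dividend[of u m] by simp
qed (auto intro: div_nat_eqI simp: mult.commute)

lemma graph_on_disjoint_cliques: "t * m \<le> n \<Longrightarrow> graph_on n (disjoint_cliques m t)"
  unfolding graph_on_def disjoint_cliques_def by auto

lemma degree_disjoint_cliques:
  assumes m: "0 < m" and tn: "t * m \<le> n"
  shows "degree n (disjoint_cliques m t) v = (if v < t * m then m - 1 else 0)"
proof (cases "v < t * m")
  case True
  define b where "b = v div m"
  have "b < t" using True b_def by (simp add: less_mult_imp_div_less)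
  then have "b * m + m \<le> t * m" using mult_le_mono1[of "Suc b" t m] by simp
  then have "{u. u < n \<and> disjoint_cliques m t v u} = {b * m..<b * m + m} - {v}"
    using True tn unfolding disjoint_cliques_def
    by (auto simp: div_eq_iff_in_block[OF m] b_def[symmetric] eq_commute[of b])
  moreover have "v \<in> {b * m..<b * m + m}"
    using div_eq_iff_in_block[OF m, of v b] b_def by simp
  ultimately show ?thesis using True unfolding degree_def by simp
next
  case False
  then show ?thesis unfolding degree_def disjoint_cliques_def by simp
qed

lemma max_degree_disjoint_cliques:
  assumes m: "0 < m" and t: "0 < t" and tn: "t * m \<le> n"
  shows "max_degree n (disjoint_cliques m t) = m - 1"
  unfolding max_degree_def
proof (rule Max_eqI)
  show "finite (insert 0 (degree n (disjoint_cliques m t) ` {..<n}))" by simp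
  show "y \<le> m - 1" if "y \<in> insert 0 (degree n (disjoint_cliques m t) ` {..<n})" for y
    using that degree_disjoint_cliques[OF m tn] by auto
  have "0 < t * m" using m t by simp
  then have "0 < n" and "degree n (disjoint_cliques m t) 0 = m - 1"
    using tn by (linarith, simp add: degree_disjoint_cliques[OF m tn])
  then show "m - 1 \<in> insert 0 (degree n (disjoint_cliques m t) ` {..<n})"
    by (intro insertI2 image_eqI[where x = 0]) simp_all
qed

text \<open>Pigeonhole: a proper colouring of a clique of size \<open>m\<close> needs \<open>m\<close> colours from the shared list.\<close>

lemma list_colorable_disjoint_cliques_nonconstant:
  assumes L: "L \<in> assignments A n" and A: "\<And>B. B \<in> A \<Longrightarrow> finite B \<and> card B < m"
    and "0 < m" and tn: "t * m \<le> n" and j: "j < t"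
    and col: "list_colorable n (disjoint_cliques m t) L"
  shows "nonconstant m (segment_asg (j * m) m L)"
proof (rule ccontr)
  assume "\<not> nonconstant m (segment_asg (j * m) m L)"
  then have const: "L (j * m + i) = L (j * m)" if "i < m" for i
    using that by (auto simp: nonconstant_def segment_asg_def)
  from col obtain C where C_in: "\<forall>v<n. C v \<in> L v"
    and C_proper: "\<forall>u v. u < n \<and> v < n \<and> disjoint_cliques m t u v \<longrightarrow> C u \<noteq> C v"
    unfolding list_colorable_def by blast
  have in_block: "j * m + i < t * m" if "i < m" for i
    using that mult_le_mono1[of "Suc j" t m] j by simp
  have same_block: "(j * m + i) div m = j" if "i < m" for i
    using that \<open>0 < m\<close> by (subst div_eq_iff_in_block) simp_all
  have "inj_on (\<lambda>i. C (j * m + i)) {..<m}"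
  proof (rule inj_onI, rule ccontr)
    fix i i' assume "i \<in> {..<m}" "i' \<in> {..<m}" "C (j * m + i) = C (j * m + i')" "i \<noteq> i'"
    moreover from this have "disjoint_cliques m t (j * m + i) (j * m + i')"
      using in_block same_block unfolding disjoint_cliques_def by simp
    ultimately show False
      using C_proper in_block tn by (meson lessThan_iff order_less_le_trans)
  qed
  moreover have "(\<lambda>i. C (j * m + i)) ` {..<m} \<subseteq> L (j * m)"
  proof clarify
    fix i assume "i < m"
    then have "C (j * m + i) \<in> L (j * m + i)"
      using C_in in_block tn by (meson order_less_le_trans)
    then show "C (j * m + i) \<in> L (j * m)" using const[OF \<open>i < m\<close>] by simp
  qed
  moreover have "L (j * m) \<in> A"
    using L in_block[OF \<open>0 < m\<close>] tn unfolding assignments_def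
    by (metis (no_types, lifting) add_0_right mem_Collect_eq order_less_le_trans)
  ultimately have "m \<le> card (L (j * m))"
    using A card_mono card_image by (metis card_lessThan)
  then show False using A \<open>L (j * m) \<in> A\<close> by (simp add: not_le[symmetric])
qed

lemma card_list_colorable_disjoint_cliques_le:
  assumes A: "finite A" "\<And>B. B \<in> A \<Longrightarrow> finite B \<and> card B < m"
    and m: "0 < m" and tn: "t * m \<le> n"
  shows "card {L \<in> assignments A n. list_colorable n (disjoint_cliques m t) L}
           \<le> (card A ^ m - card A) ^ t * card A ^ (n - t * m)"
proof -
  define r where "r = n - t * m"
  have n: "n = t * m + r" using tn unfolding r_def by simp
  define good :: "(nat \<Rightarrow> nat set) \<Rightarrow> bool"
    where "good = (\<lambda>L. \<forall>j<t. nonconstant m (segment_asg (j * m) m L))"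
  let ?Good = "{L \<in> assignments A (t * m + r). good (prefix_asg (t * m) L)}"
  have "{L \<in> assignments A n. list_colorable n (disjoint_cliques m t) L} \<subseteq> ?Good"
    using list_colorable_disjoint_cliques_nonconstant[OF _ A(2) m tn]
    by (auto simp: n good_def segment_prefix_asg)
  moreover have card_Good: "card ?Good = (card A ^ m - card A) ^ t * card A ^ r"
    using card_assignments_append[of A "t * m" r good "\<lambda>_. True"]
    by (simp add: good_def card_assignments card_blockwise_nonconstant
        card_nonconstant_assignments[OF A(1) m])
  moreover have "finite ?Good" using finite_assignments[OF A(1)] by simp
  ultimately show ?thesis
    unfolding r_def by (metis (no_types, lifting) card_mono)
qed

lemma one_minus_power_le:
  fixes x :: real
  assumes "0 \<le> x" "x \<le> 1"
  shows "(1 - x) ^ t \<le> 1 / (1 + real t * x)"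
proof -
  have "(1 - x) ^ t * (1 + real t * x) \<le> (1 - x) ^ t * (1 + x) ^ t"
    using assms by (intro mult_left_mono Bernoulli_inequality) simp_all
  also have "\<dots> = (1 - x * x) ^ t" by (simp add: power_mult_distrib[symmetric] algebra_simps)
  also have "\<dots> \<le> 1" using assms by (intro power_le_one) (simp_all add: mult_le_one)
  finally show ?thesis using assms by (simp add: field_simps add_pos_nonneg)
qed

lemma prob_colorable_disjoint_cliques_le:
  assumes tn: "t * (K + 1) \<le> n"
  shows "prob_colorable n (disjoint_cliques (K + 1) t) K (K + 1) \<le> 1 / (1 + real t / real (K + 1) ^ K)"
proof -
  define A where "A = {B. B \<subseteq> {1..K + 1} \<and> card B = K}"
  define a where "a = real (K + 1)"
  have card_A: "card A = K + 1" unfolding A_def by (subst n_subsets) simp_all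
  have "finite A" unfolding A_def by simp
  moreover have "finite B \<and> card B < K + 1" if "B \<in> A" for B
    using that unfolding A_def by (auto intro: finite_subset)
  ultimately have "card {L \<in> assignments A n. list_colorable n (disjoint_cliques (K + 1) t) L}
      \<le> ((K + 1) ^ (K + 1) - (K + 1)) ^ t * (K + 1) ^ (n - t * (K + 1))"
    using card_list_colorable_disjoint_cliques_le[of A "K + 1" t n] tn card_A by simp
  then have "real (card {L \<in> assignments A n. list_colorable n (disjoint_cliques (K + 1) t) L})
      \<le> real ((K + 1) ^ (K + 1) - (K + 1)) ^ t * a ^ (n - t * (K + 1))"
    unfolding a_def by (simp only: of_nat_le_iff flip: of_nat_mult of_nat_power)
  moreover have "real ((K + 1) ^ (K + 1) - (K + 1)) = a ^ (K + 1) - a"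
    unfolding a_def by (simp only: of_nat_diff[OF self_le_power] of_nat_power)
  ultimately have "real (card {L \<in> assignments A n. list_colorable n (disjoint_cliques (K + 1) t) L})
      \<le> (a ^ (K + 1) - a) ^ t * a ^ (n - t * (K + 1))"
    by simp
  moreover have "real (card (list_assignments n K (K + 1))) = a ^ n"
    unfolding list_assignments_eq_assignments A_def[symmetric] card_assignments card_A a_def
    by simp
  ultimately have "prob_colorable n (disjoint_cliques (K + 1) t) K (K + 1)
               \<le> (a ^ (K + 1) - a) ^ t * a ^ (n - t * (K + 1)) / a ^ n"
    unfolding prob_colorable_def list_assignments_eq_assignments A_def[symmetric]
    by (simp add: divide_right_mono)
  also have "\<dots> = (1 - 1 / a ^ K) ^ t"
  proof -
    define r where "r = n - t * (K + 1)"
    have "0 < a" unfolding a_def by simp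
    have "n = (K + 1) * t + r" unfolding r_def using tn by (simp add: mult.commute)
    then have "a ^ n = (a ^ (K + 1)) ^ t * a ^ r" by (simp only: power_add power_mult)
    then have "(a ^ (K + 1) - a) ^ t * a ^ r / a ^ n = ((a ^ (K + 1) - a) / a ^ (K + 1)) ^ t"
      using \<open>0 < a\<close> by (simp add: power_divide)
    also have "(a ^ (K + 1) - a) / a ^ (K + 1) = 1 - 1 / a ^ K"
      using \<open>0 < a\<close> by (simp add: diff_divide_distrib)
    finally show ?thesis unfolding r_def .
  qed
  also have "\<dots> \<le> 1 / (1 + real t * (1 / a ^ K))"
    unfolding a_def by (intro one_minus_power_le) simp_all
  finally show ?thesis by (simp add: a_def)
qed

lemma div_pos_if_power_self_le_sqrt:
  assumes n: "0 < n" and small: "real (K + 1) ^ (K + 1) \<le> sqrt (real n)"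
  shows "0 < n div (K + 1)"
proof -
  have "real (K + 1) \<le> real (K + 1) ^ (K + 1)" by (intro self_le_power) simp_all
  also have "\<dots> \<le> sqrt (real n)" using small by simp
  also have "\<dots> \<le> real n" using n by (intro real_le_lsqrt) (simp_all add: power2_eq_square)
  finally have "K + 1 \<le> n" by linarith
  then show ?thesis by (simp add: div_greater_zero_iff)
qed

lemma prob_colorable_disjoint_cliques_le_sqrt:
  assumes n: "0 < n" and small: "real (K + 1) ^ (K + 1) \<le> sqrt (real n)"
  shows "prob_colorable n (disjoint_cliques (K + 1) (n div (K + 1))) K (K + 1) \<le> 1 / sqrt (real n)"
proof -
  define a where "a = K + 1"
  define t where "t = n div a"
  have "real n < (real t + 1) * real a"
    unfolding t_def a_def using dividend_less_div_times[of "K + 1" n]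
    by (simp add: algebra_simps flip: of_nat_mult)
  have "sqrt (real n) = real n / sqrt (real n)" by (simp add: real_div_sqrt)
  also have "\<dots> \<le> real n / real a ^ (K + 1)"
    using small n unfolding a_def by (intro divide_left_mono) simp_all
  also have "\<dots> = real n / real a / real a ^ K"
    by (simp add: divide_divide_eq_left power_add mult.commute)
  also have "\<dots> \<le> (real t + 1) / real a ^ K"
    using \<open>real n < (real t + 1) * real a\<close> unfolding a_def
    by (intro divide_right_mono) (simp_all add: divide_le_eq)
  also have "\<dots> \<le> 1 + real t / real a ^ K"
    unfolding a_def by (simp add: add_divide_distrib)
  finally have "sqrt (real n) \<le> 1 + real t / real a ^ K" .
  moreover have "0 < sqrt (real n)" using n by simp
  ultimately have "1 / (1 + real t / real a ^ K) \<le> 1 / sqrt (real n)"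
    by (intro divide_left_mono mult_pos_pos) (simp_all add: add_pos_nonneg)
  moreover have "prob_colorable n (disjoint_cliques a t) K a \<le> 1 / (1 + real t / real a ^ K)"
    using div_times_less_eq_dividend[of n a]
    unfolding a_def t_def by (intro prob_colorable_disjoint_cliques_le) simp
  ultimately show ?thesis unfolding t_def a_def by linarith
qed

lemma power_self_le_sqrt:
  fixes n k :: nat
  assumes L: "1 < ln (real n)" and LL: "1 \<le> 2 * ln (ln (real n))"
    and k: "real (k + 1) \<le> ln (real n) / (2 * ln (ln (real n)))"
  shows "real (k + 1) ^ (k + 1) \<le> sqrt (real n)"
proof -
  define m where "m = real (k + 1)"
  have n: "0 < real n" using L by (cases n) auto
  have "ln (real n) / (2 * ln (ln (real n))) \<le> ln (real n) / 1"
    using LL L by (intro divide_left_mono) simp_all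
  then have "m \<le> ln (real n)" using k unfolding m_def by simp
  then have "ln m \<le> ln (ln (real n))"
    unfolding m_def by (subst ln_le_cancel_iff) simp_all
  then have "m * ln m \<le> ln (real n) / (2 * ln (ln (real n))) * ln (ln (real n))"
    using k unfolding m_def by (intro mult_mono) simp_all
  also have "\<dots> = ln (sqrt (real n))"
    using LL n by (simp add: ln_sqrt)
  finally have "exp (m * ln m) \<le> sqrt (real n)"
    using n by (metis exp_le_cancel_iff exp_ln real_sqrt_gt_0_iff)
  moreover have "real (k + 1) ^ (k + 1) = m powr m"
    unfolding m_def by (subst powr_realpow) simp_all
  moreover have "m powr m = exp (m * ln m)"
    unfolding m_def by (simp add: powr_def)
  ultimately show ?thesis by simp
qed

lemma eventually_power_self_le_sqrt:
  fixes K :: "nat \<Rightarrow> nat"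
  assumes "(\<lambda>n. real (K n)) \<in> o(\<lambda>n. ln (real n) / ln (ln (real n)))"
  shows "\<forall>\<^sub>F n in sequentially. 0 < n \<and> real (K n + 1) ^ (K n + 1) \<le> sqrt (real n)"
proof -
  have "\<forall>\<^sub>F n in sequentially. real (K n) \<le> 1/4 * \<bar>ln (real n) / ln (ln (real n))\<bar>"
    using landau_o.smallD[OF assms, of "1/4"] by simp
  moreover have "\<forall>\<^sub>F n in sequentially. 1 \<le> 1/4 * (ln (real n) / ln (ln (real n)))"
    by real_asymp
  moreover have "\<forall>\<^sub>F n in sequentially. 1 \<le> 2 * ln (ln (real n))" by real_asymp
  moreover have "\<forall>\<^sub>F n in sequentially. 1 < ln (real n)" by real_asymp
  ultimately show ?thesis
  proof eventually_elim
    case (elim n)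
    then have "\<bar>ln (real n) / ln (ln (real n))\<bar> = ln (real n) / ln (ln (real n))"
      by (intro abs_of_pos divide_pos_pos) simp_all
    moreover have "ln (real n) / (2 * ln (ln (real n))) = 2 * (1/4 * (ln (real n) / ln (ln (real n))))"
      by simp
    ultimately have "real (K n + 1) \<le> ln (real n) / (2 * ln (ln (real n)))"
      using elim by linarith
    with elim show ?case
      using power_self_le_sqrt by (auto intro: Nat.gr0I)
  qed
qed

theorem mainTheorem16:
  fixes K :: "nat \<Rightarrow> nat"
  assumes "(\<lambda>n. real (K n)) \<in> o(\<lambda>n. ln (real n) / ln (ln (real n)))"
  shows "\<exists>G :: nat \<Rightarrow> (nat \<Rightarrow> nat \<Rightarrow> bool).
           (\<forall>\<^sub>F n in sequentially.
              graph_on n (G n) \<and> K n \<le> max_degree n (G n) + 1) \<and>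
           ((\<lambda>n. prob_colorable n (G n) (K n) (max_degree n (G n) + 1)) \<longlonglongrightarrow> 0)"
proof -
  define G where "G = (\<lambda>n. disjoint_cliques (K n + 1) (n div (K n + 1)))"
  have good: "\<forall>\<^sub>F n in sequentially. graph_on n (G n) \<and> max_degree n (G n) = K n
      \<and> prob_colorable n (G n) (K n) (K n + 1) \<le> 1 / sqrt (real n)"
    using eventually_power_self_le_sqrt[OF assms]
  proof eventually_elim
    case (elim n)
    then have n: "0 < n" and small: "real (K n + 1) ^ (K n + 1) \<le> sqrt (real n)" by simp_all
    have "n div (K n + 1) * (K n + 1) \<le> n" by (rule div_times_less_eq_dividend)
    then show ?case
      unfolding G_def
      using prob_colorable_disjoint_cliques_le_sqrt[OF n small] graph_on_disjoint_cliques
        max_degree_disjoint_cliques[OF _ div_pos_if_power_self_le_sqrt[OF n small]] by simp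
  qed
  have "(\<lambda>n. prob_colorable n (G n) (K n) (max_degree n (G n) + 1)) \<longlonglongrightarrow> 0"
  proof (rule tendsto_sandwich[OF _ _ tendsto_const])
    show "\<forall>\<^sub>F n in sequentially. 0 \<le> prob_colorable n (G n) (K n) (max_degree n (G n) + 1)"
      by (simp add: prob_colorable_def)
    show "\<forall>\<^sub>F n in sequentially. prob_colorable n (G n) (K n) (max_degree n (G n) + 1) \<le> 1 / sqrt (real n)"
      using good by eventually_elim simp
    show "(\<lambda>n. 1 / sqrt (real n)) \<longlonglongrightarrow> 0" by real_asymp
  qed
  moreover have "\<forall>\<^sub>F n in sequentially. graph_on n (G n) \<and> K n \<le> max_degree n (G n) + 1"
    using good by eventually_elim simp
  ultimately show ?thesis by blast
qed

end
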